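(* For $\epsilon \in [0,1]$, let $F_\epsilon$ be the solution of $$F_\epsilon''(t) = (\epsilon - 3Q(t)^2)F_\epsilon(t), \quad t > 0, \qquad F_\epsilon(0) = 0,\ F_\epsilon'(0) = -1.$$ Then $F_\epsilon$ changes its sign at least once on $(0,\infty)$. Moreover, its first positive zero $t_\epsilon$ satisfies $t_\epsilon \ge t_0 > 0$, where $t_0$ is the first positive zero of $F_0$ (the solution for $\epsilon = 0$).
   Context: $Q(t)$, $t\ge 0$, denotes the radial profile of the positive radial ground state of $\Delta\phi - \phi + |\phi|^2\phi = 0$ on $\mathbb{R}^3$; it solves $-Q'' - \frac{2}{t}Q' + Q - Q^3 = 0$. *)

theory Defs
  imports "HOL-Analysis.Analysis"
begin

text \<open>Radial profile of the positive radial ground state of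
  Delta phi - phi + |phi|^2 phi = 0 on R^3: a positive function on [0,oo),
  regular at the origin (Q'(0) = 0), decaying to 0 at infinity, and solving
  -Q'' - (2/t) Q' + Q - Q^3 = 0 for t > 0.  Q' is the derivative of Q.
  (By the Coffman/Kwong uniqueness theorem this determines Q.)\<close>
definition ground_state_profile :: "(real \<Rightarrow> real) \<Rightarrow> (real \<Rightarrow> real) \<Rightarrow> bool" where
  "ground_state_profile Q Q' \<longleftrightarrow>
     (\<forall>t\<ge>0. Q t > 0) \<and>
     (Q has_real_derivative 0) (at 0 within {0..}) \<and>
     Q' 0 = 0 \<and>
     (\<forall>t>0. (Q has_real_derivative Q' t) (at t)) \<and>
     (\<forall>t>0. \<exists>Q''. (Q' has_real_derivative Q'') (at t) \<and>
              - Q'' - (2 / t) * Q' t + Q t - Q t ^ 3 = 0) \<and>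
     (Q \<longlongrightarrow> 0) at_top"

definition solves_F :: "(real \<Rightarrow> real) \<Rightarrow> real \<Rightarrow> (real \<Rightarrow> real) \<Rightarrow> (real \<Rightarrow> real) \<Rightarrow> bool" where
  "solves_F Q eps F F' \<longleftrightarrow>
     F 0 = 0 \<and>
     (F has_real_derivative -1) (at 0 within {0..}) \<and>
     F' 0 = -1 \<and>
     (\<forall>t>0. (F has_real_derivative F' t) (at t)) \<and>
     (\<forall>t>0. (F' has_real_derivative (eps - 3 * Q t ^ 2) * F t) (at t))"

end

theory Submission
  imports Defs
begin

(* The function G = t (Q + t Q') solves G'' = (1 - 3 Q^2) G + 2 t Q and is positive up to a first
   zero t1, which exists because Q decays.  If F stayed <= 0, the Wronskian W = F' G - F G' would
   vanish at 0 and satisfy W' = (eps - 1) F G - 2 t Q F >= 0 on (0, t1), strictly near 0, so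
   W(t1) > 0; but W(t1) = - F(t1) G'(t1) <= 0.  For the first zeros, the Wronskian F' F0 - F F0'
   vanishes at 0 and has derivative eps F F0 >= 0 while F, F0 < 0, so F / F0 is nondecreasing
   there and F cannot vanish before F0 does. *)

lemma eventually_at_right_greaterI:
  fixes P :: "real \<Rightarrow> bool"
  assumes "\<And>t. a < t \<Longrightarrow> P t"
  shows "\<forall>\<^sub>F t in at_right a. P t"
  using eventually_at_right_less[of a] by (rule eventually_mono) (rule assms)

lemma tendsto_at_right_of_has_real_derivative_within:
  fixes f :: "real \<Rightarrow> real"
  assumes "(f has_real_derivative D) (at a within {a..})"
  shows "(f \<longlongrightarrow> f a) (at_right a)"
  using DERIV_continuous[OF assms] by (simp add: continuous_within at_within_Ici_at_right)

lemma convergent_at_right_of_deriv_tendsto: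
  fixes f f' :: "real \<Rightarrow> real"
  assumes deriv: "\<And>t. a < t \<Longrightarrow> (f has_real_derivative f' t) (at t)"
    and lim: "(f' \<longlongrightarrow> l) (at_right a)"
  obtains L where "(f \<longlongrightarrow> L) (at_right a)"
proof -
  have "\<forall>\<^sub>F t in at_right a. norm (f' t) < norm l + 1"
    using tendsto_norm[OF lim] by (rule order_tendstoD) simp
  then obtain b where "b > a" and bound: "\<And>t. a < t \<Longrightarrow> t < b \<Longrightarrow> norm (f' t) \<le> norm l + 1"
    unfolding eventually_at_right_field by (metis less_imp_le)
  have "(norm l + 1)-lipschitz_on {a<..<b} f"
  proof (rule lipschitz_onI)
    fix x y assume "x \<in> {a<..<b}" "y \<in> {a<..<b}"
    then show "dist (f x) (f y) \<le> (norm l + 1) * dist x y"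
      unfolding dist_norm
      by (intro field_differentiable_bound[OF convex_real_interval(8)])
         (use bound deriv in \<open>auto intro: has_field_derivative_at_within\<close>)
  qed simp
  then obtain L where "(f \<longlongrightarrow> L) (at a within {a<..<b})"
    by (rule uniformly_continuous_on_extension_at_closure[OF lipschitz_on_uniformly_continuous])
       (use \<open>b > a\<close> in auto)
  moreover have "at a within {a<..<b} = at_right a"
    by (rule at_within_nhd[where S = "{..<b}"]) (use \<open>b > a\<close> in auto)
  ultimately show thesis using that by simp
qed

lemma exists_first_zero:
  fixes f :: "real \<Rightarrow> real"
  assumes cont: "\<And>t. 0 < t \<Longrightarrow> isCont f t"
    and pos: "\<forall>\<^sub>F t in at_right 0. f t > 0"
    and "0 < t" "f t \<le> 0"
  obtains z where "0 < z" "f z = 0" "\<And>s. 0 < s \<Longrightarrow> s < z \<Longrightarrow> f s > 0"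
proof -
  obtain d where "d > 0" and pos_d: "\<And>s. 0 < s \<Longrightarrow> s < d \<Longrightarrow> f s > 0"
    using pos unfolding eventually_at_right_field by blast
  define S where "S = {d/2..} \<inter> f -` {..0}"
  have "t \<in> S"
    using pos_d[of t] \<open>0 < t\<close> \<open>f t \<le> 0\<close> unfolding S_def by (cases "t < d") auto
  moreover have "closed S"
    unfolding S_def using \<open>d > 0\<close> cont
    by (intro continuous_closed_preimage continuous_at_imp_continuous_on) auto
  moreover have bdd: "bdd_below S"
    unfolding S_def by (rule bdd_belowI[of _ "d/2"]) auto
  ultimately have "Inf S \<in> S"
    by (intro closed_contains_Inf) auto
  then have z: "Inf S \<ge> d/2" "f (Inf S) \<le> 0"
    unfolding S_def by auto
  have pos_below: "f s > 0" if "0 < s" "s < Inf S" for s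
  proof (cases "s < d/2")
    case False
    then have "s \<notin> S"
      using cInf_lower[OF _ bdd, of s] \<open>s < Inf S\<close> by auto
    with False show ?thesis unfolding S_def by auto
  qed (use pos_d \<open>0 < s\<close> in auto)
  have "f (Inf S) \<ge> 0"
  proof (rule tendsto_lowerbound)
    show "(f \<longlongrightarrow> f (Inf S)) (at_left (Inf S))"
      using cont[of "Inf S"] \<open>d > 0\<close> z(1) by (simp add: isCont_def filterlim_at_split)
    show "\<forall>\<^sub>F s in at_left (Inf S). 0 \<le> f s"
      unfolding eventually_at_left_field using \<open>d > 0\<close> z(1) pos_below
      by (intro exI[of _ 0]) (auto intro: less_imp_le)
  qed simp
  with z \<open>d > 0\<close> pos_below show thesis
    by (intro that[of "Inf S"]) auto
qed

lemma has_real_derivative_nonpos_at_first_zero: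
  fixes f :: "real \<Rightarrow> real"
  assumes "(f has_real_derivative D) (at z)" "f z = 0"
    and "y < z" "\<And>s. y < s \<Longrightarrow> s < z \<Longrightarrow> f s > 0"
  shows "D \<le> 0"
proof (rule ccontr)
  assume "\<not> D \<le> 0"
  then obtain d where "d > 0" and dec: "\<And>h. 0 < h \<Longrightarrow> h < d \<Longrightarrow> f (z - h) < f z"
    using DERIV_pos_inc_left[OF assms(1)] by force
  define h where "h = min (d/2) ((z - y)/2)"
  have "0 < h" "h < d" "h < z - y"
    using \<open>d > 0\<close> \<open>y < z\<close> unfolding h_def by (auto simp: min_less_iff_disj)
  then show False
    using dec[of h] assms(4)[of "z - h"] \<open>f z = 0\<close> by auto
qed

lemma nonneg_of_deriv_nonneg_at_right_0:
  fixes W W' :: "real \<Rightarrow> real"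
  assumes lim: "(W \<longlongrightarrow> 0) (at_right 0)"
    and deriv: "\<And>s. 0 < s \<Longrightarrow> s \<le> t \<Longrightarrow> (W has_real_derivative W' s) (at s)"
    and nonneg: "\<And>s. 0 < s \<Longrightarrow> s < t \<Longrightarrow> W' s \<ge> 0"
    and "0 < t"
  shows "W t \<ge> 0"
proof (rule tendsto_upperbound[OF lim])
  have "W s \<le> W t" if "0 < s" "s < t" for s
  proof (rule DERIV_nonneg_imp_increasing_open[of s t W])
    show "\<exists>y. (W has_real_derivative y) (at x) \<and> 0 \<le> y" if "s < x" "x < t" for x
      using that \<open>0 < s\<close> deriv nonneg by (intro exI[of _ "W' x"]) auto
    show "continuous_on {s..t} W"
      using \<open>0 < s\<close> deriv by (intro DERIV_atLeastAtMost_imp_continuous_on) (meson less_le_trans)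
  qed (use that in auto)
  then show "\<forall>\<^sub>F s in at_right 0. W s \<le> W t"
    unfolding eventually_at_right_field using \<open>0 < t\<close> by blast
qed simp

lemma pos_of_deriv_nonneg_at_right_0:
  fixes W W' :: "real \<Rightarrow> real"
  assumes lim: "(W \<longlongrightarrow> 0) (at_right 0)"
    and deriv: "\<And>s. 0 < s \<Longrightarrow> s \<le> t \<Longrightarrow> (W has_real_derivative W' s) (at s)"
    and nonneg: "\<And>s. 0 < s \<Longrightarrow> s < t \<Longrightarrow> W' s \<ge> 0"
    and pos: "\<forall>\<^sub>F s in at_right 0. W' s > 0"
    and "0 < t"
  shows "W t > 0"
proof -
  obtain c where "0 < c" and pos_c: "\<And>s. 0 < s \<Longrightarrow> s < c \<Longrightarrow> W' s > 0"
    using pos unfolding eventually_at_right_field by blast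
  define b where "b = min c t"
  have b: "0 < b" "b \<le> t" "b \<le> c"
    using \<open>0 < c\<close> \<open>0 < t\<close> unfolding b_def by auto
  have cont: "continuous_on {x..y} W" if "0 < x" "y \<le> t" for x y
    using that deriv
    by (intro DERIV_atLeastAtMost_imp_continuous_on) (meson less_le_trans order_trans)
  have "0 \<le> W (b/2)"
    using b deriv nonneg by (intro nonneg_of_deriv_nonneg_at_right_0[OF lim, of _ W']) auto
  also have "W (b/2) < W b"
  proof (rule DERIV_pos_imp_increasing_open[of "b/2" b W])
    show "\<exists>y. (W has_real_derivative y) (at x) \<and> 0 < y" if "b/2 < x" "x < b" for x
      using that b deriv pos_c by (intro exI[of _ "W' x"]) auto
  qed (use b cont in auto)
  also have "W b \<le> W t"
  proof (rule DERIV_nonneg_imp_increasing_open[of b t W])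
    show "\<exists>y. (W has_real_derivative y) (at x) \<and> 0 \<le> y" if "b < x" "x < t" for x
      using that b deriv nonneg by (intro exI[of _ "W' x"]) auto
  qed (use b cont in auto)
  finally show ?thesis .
qed

lemma wronskian_has_real_derivative:
  fixes f f' g g' :: "real \<Rightarrow> real"
  assumes "(f has_real_derivative f' t) (at t)" "(f' has_real_derivative a * f t) (at t)"
    and "(g has_real_derivative g' t) (at t)" "(g' has_real_derivative b * g t + r) (at t)"
  shows "((\<lambda>s. f' s * g s - f s * g' s) has_real_derivative (a - b) * f t * g t - f t * r) (at t)"
  using assms by (auto intro!: derivative_eq_intros simp: algebra_simps)

lemma divide_le_divide_of_wronskian_nonneg:
  fixes f f' g g' :: "real \<Rightarrow> real"
  assumes "a \<le> b"
    and f: "\<And>t. a \<le> t \<Longrightarrow> t \<le> b \<Longrightarrow> (f has_real_derivative f' t) (at t)"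
    and g: "\<And>t. a \<le> t \<Longrightarrow> t \<le> b \<Longrightarrow> (g has_real_derivative g' t) (at t)"
    and nonzero: "\<And>t. a \<le> t \<Longrightarrow> t \<le> b \<Longrightarrow> g t \<noteq> 0"
    and wronskian: "\<And>t. a < t \<Longrightarrow> t < b \<Longrightarrow> f' t * g t - f t * g' t \<ge> 0"
  shows "f a / g a \<le> f b / g b"
proof -
  have deriv: "((\<lambda>s. f s / g s) has_real_derivative (f' t * g t - f t * g' t) / (g t * g t)) (at t)"
    if "a \<le> t" "t \<le> b" for t
    using that f g nonzero by (intro DERIV_divide) auto
  show ?thesis
  proof (rule DERIV_nonneg_imp_increasing_open[of a b "\<lambda>s. f s / g s"])
    show "\<exists>y. ((\<lambda>s. f s / g s) has_real_derivative y) (at x) \<and> 0 \<le> y" if "a < x" "x < b" for x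
      using that deriv wronskian by (intro exI[of _ "(f' x * g x - f x * g' x) / (g x * g x)"]) auto
    show "continuous_on {a..b} (\<lambda>s. f s / g s)"
      using deriv by (intro DERIV_atLeastAtMost_imp_continuous_on) auto
  qed (use \<open>a \<le> b\<close> in auto)
qed

lemma ground_state_profileD:
  assumes "ground_state_profile Q Q'"
  shows ground_state_pos: "\<And>t. 0 \<le> t \<Longrightarrow> Q t > 0"
    and ground_state_deriv_0: "(Q has_real_derivative 0) (at 0 within {0..})"
    and ground_state_deriv: "\<And>t. 0 < t \<Longrightarrow> (Q has_real_derivative Q' t) (at t)"
    and ground_state_deriv2:
      "\<And>t. 0 < t \<Longrightarrow> (Q' has_real_derivative Q t - Q t ^ 3 - 2 / t * Q' t) (at t)"
    and ground_state_tendsto_at_top: "(Q \<longlongrightarrow> 0) at_top"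
proof -
  show "(Q' has_real_derivative Q t - Q t ^ 3 - 2 / t * Q' t) (at t)" if "0 < t" for t
  proof -
    obtain D where "(Q' has_real_derivative D) (at t)" "- D - 2 / t * Q' t + Q t - Q t ^ 3 = 0"
      using assms \<open>0 < t\<close> unfolding ground_state_profile_def by blast
    moreover from this(2) have "D = Q t - Q t ^ 3 - 2 / t * Q' t" by linarith
    ultimately show ?thesis by simp
  qed
qed (use assms in \<open>auto simp: ground_state_profile_def\<close>)

lemma ground_state_derivs:
  assumes "ground_state_profile Q Q'" "0 < t"
  shows "((\<lambda>s. s\<^sup>2 * Q' s) has_real_derivative t\<^sup>2 * (Q t - Q t ^ 3)) (at t)"
    and "((\<lambda>s. Q s + s * Q' s) has_real_derivative t * (Q t - Q t ^ 3)) (at t)"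
  unfolding atomize_conj
  by (intro conjI; rule DERIV_cong,
      (rule ground_state_deriv[OF assms] ground_state_deriv2[OF assms] derivative_eq_intros refl)+,
      use assms(2) in \<open>simp add: field_simps power2_eq_square\<close>)

lemma ground_state_times_deriv_tendsto_0:
  assumes gs: "ground_state_profile Q Q'"
  shows "((\<lambda>t. t * Q' t) \<longlongrightarrow> 0) (at_right 0)"
proof -
  (* t^2 Q' converges since its derivative does; l'Hopital for Q / (1/t) shows that the limit
     is 0, and l'Hopital again for t^2 Q' / t gives the claim. *)
  have Q_lim: "(Q \<longlongrightarrow> Q 0) (at_right 0)"
    by (rule tendsto_at_right_of_has_real_derivative_within[OF ground_state_deriv_0[OF gs]])
  have "((\<lambda>t. t\<^sup>2 * (Q t - Q t ^ 3)) \<longlongrightarrow> 0\<^sup>2 * (Q 0 - Q 0 ^ 3)) (at_right 0)"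
    by (intro tendsto_intros Q_lim)
  then have dphi_lim: "((\<lambda>t. t\<^sup>2 * (Q t - Q t ^ 3)) \<longlongrightarrow> 0) (at_right 0)"
    by simp
  obtain L where phi_lim: "((\<lambda>t. t\<^sup>2 * Q' t) \<longlongrightarrow> L) (at_right 0)"
    using convergent_at_right_of_deriv_tendsto[OF ground_state_derivs(1)[OF gs] dphi_lim] by blast
  have "((\<lambda>t. Q t / inverse t) \<longlongrightarrow> - L) (at_right 0)"
  proof (rule lhopital_right_0_at_top[OF filterlim_inverse_at_top_right])
    show "\<forall>\<^sub>F t in at_right 0. - (inverse t ^ 2) \<noteq> (0::real)"
      by (rule eventually_at_right_greaterI) simp
    show "\<forall>\<^sub>F t in at_right 0. (Q has_real_derivative Q' t) (at t)"
      by (rule eventually_at_right_greaterI) (rule ground_state_deriv[OF gs])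
    show "\<forall>\<^sub>F t in at_right 0. (inverse has_real_derivative - (inverse t ^ 2)) (at t)"
      by (rule eventually_at_right_greaterI)
        (auto intro!: derivative_eq_intros simp: power2_eq_square)
    have "\<forall>\<^sub>F t in at_right 0. - (t\<^sup>2 * Q' t) = Q' t / - (inverse t ^ 2)"
      by (rule eventually_at_right_greaterI) (simp add: field_simps)
    with tendsto_minus[OF phi_lim] show "((\<lambda>t. Q' t / - (inverse t ^ 2)) \<longlongrightarrow> - L) (at_right 0)"
      by (rule Lim_transform_eventually)
  qed
  moreover have "((\<lambda>t. Q t / inverse t) \<longlongrightarrow> 0 * Q 0) (at_right 0)"
    unfolding divide_inverse inverse_inverse_eq using tendsto_mult[OF Q_lim tendsto_ident_at]
    by (simp add: mult.commute)
  ultimately have "L = 0"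
    using tendsto_unique[of "at_right (0::real)"] by fastforce
  have "((\<lambda>t. t\<^sup>2 * Q' t / t) \<longlongrightarrow> 0) (at_right 0)"
  proof (rule lhopital_right_0[OF _ tendsto_ident_at])
    show "((\<lambda>t. t\<^sup>2 * Q' t) \<longlongrightarrow> 0) (at_right 0)"
      using phi_lim \<open>L = 0\<close> by simp
    show "\<forall>\<^sub>F t in at_right 0. (t::real) \<noteq> 0"
      by (rule eventually_at_right_greaterI) simp
    show "\<forall>\<^sub>F t in at_right 0. (1::real) \<noteq> 0"
      by simp
    show "\<forall>\<^sub>F t in at_right 0. ((\<lambda>t. t\<^sup>2 * Q' t) has_real_derivative t\<^sup>2 * (Q t - Q t ^ 3)) (at t)"
      by (rule eventually_at_right_greaterI) (rule ground_state_derivs(1)[OF gs])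
    show "\<forall>\<^sub>F t in at_right 0. ((\<lambda>t. t) has_real_derivative 1) (at t)"
      by (auto intro!: eventually_at_right_greaterI derivative_eq_intros)
    show "((\<lambda>t. t\<^sup>2 * (Q t - Q t ^ 3) / 1) \<longlongrightarrow> 0) (at_right 0)"
      using dphi_lim by simp
  qed
  moreover have "\<forall>\<^sub>F t in at_right 0. t\<^sup>2 * Q' t / t = t * Q' t"
    by (rule eventually_at_right_greaterI) (simp add: power2_eq_square)
  ultimately show ?thesis
    by (rule Lim_transform_eventually)
qed

lemma ground_state_dilation_tendsto_at_right_0:
  assumes "ground_state_profile Q Q'"
  shows "((\<lambda>t. Q t + t * Q' t) \<longlongrightarrow> Q 0) (at_right 0)"
  using tendsto_add[OF
      tendsto_at_right_of_has_real_derivative_within[OF ground_state_deriv_0[OF assms]]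
      ground_state_times_deriv_tendsto_0[OF assms]]
  by simp

(* t (Q + x.grad Q), the reduced radial form of the generator of the dilations l Q(l x); the
   second identity of radial_dilation_derivs is L(Q + x.grad Q) = -2 Q for the linearised
   operator L = -Delta + 1 - 3 Q^2. *)
definition radial_dilation :: "(real \<Rightarrow> real) \<Rightarrow> (real \<Rightarrow> real) \<Rightarrow> real \<Rightarrow> real" where
  "radial_dilation Q Q' t = t * (Q t + t * Q' t)"

definition radial_dilation_deriv :: "(real \<Rightarrow> real) \<Rightarrow> (real \<Rightarrow> real) \<Rightarrow> real \<Rightarrow> real" where
  "radial_dilation_deriv Q Q' t = Q t + t * Q' t + t\<^sup>2 * (Q t - Q t ^ 3)"

lemma radial_dilation_derivs:
  assumes "ground_state_profile Q Q'" "0 < t"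
  shows "(radial_dilation Q Q' has_real_derivative radial_dilation_deriv Q Q' t) (at t)"
    and "(radial_dilation_deriv Q Q' has_real_derivative
            (1 - 3 * Q t ^ 2) * radial_dilation Q Q' t + 2 * t * Q t) (at t)"
  unfolding atomize_conj radial_dilation_def[abs_def] radial_dilation_deriv_def[abs_def]
  by (intro conjI; rule DERIV_cong,
      (rule ground_state_deriv[OF assms] ground_state_deriv2[OF assms] derivative_eq_intros refl)+,
      use assms(2) in \<open>simp add: field_simps power2_eq_square power3_eq_cube\<close>)

lemma radial_dilation_tendsto_at_right_0:
  assumes "ground_state_profile Q Q'"
  shows "(radial_dilation Q Q' \<longlongrightarrow> 0) (at_right 0)"
    and "(radial_dilation_deriv Q Q' \<longlongrightarrow> Q 0) (at_right 0)"
proof -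
  have "(radial_dilation Q Q' \<longlongrightarrow> 0 * Q 0) (at_right 0)"
    unfolding radial_dilation_def[abs_def]
    by (intro tendsto_intros ground_state_dilation_tendsto_at_right_0[OF assms])
  then show "(radial_dilation Q Q' \<longlongrightarrow> 0) (at_right 0)"
    by simp
  have "(radial_dilation_deriv Q Q' \<longlongrightarrow> Q 0 + 0\<^sup>2 * (Q 0 - Q 0 ^ 3)) (at_right 0)"
    unfolding radial_dilation_deriv_def[abs_def]
    by (intro tendsto_intros ground_state_dilation_tendsto_at_right_0[OF assms]
        tendsto_at_right_of_has_real_derivative_within[OF ground_state_deriv_0[OF assms]])
  then show "(radial_dilation_deriv Q Q' \<longlongrightarrow> Q 0) (at_right 0)"
    by simp
qed

lemma ground_state_dilation_nonpos:
  assumes gs: "ground_state_profile Q Q'"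
  shows "\<exists>t>0. Q t + t * Q' t \<le> 0"
proof (rule ccontr)
  (* Otherwise (t Q)' = Q + t Q' would be nondecreasing once Q < 1, so t Q would grow linearly. *)
  assume "\<not> ?thesis"
  then have dilation_pos: "\<And>t. 0 < t \<Longrightarrow> Q t + t * Q' t > 0"
    by (auto simp: not_le)
  have "\<forall>\<^sub>F t in at_top. 0 < t \<and> Q t < 1"
    using eventually_gt_at_top[of "0::real"]
      order_tendstoD(2)[OF ground_state_tendsto_at_top[OF gs] zero_less_one]
    by eventually_elim simp
  then obtain T where "\<And>t. T \<le> t \<Longrightarrow> 0 < t \<and> Q t < 1"
    unfolding eventually_at_top_linorder by blast
  then have "T > 0" and Q_lt_1: "\<And>t. T \<le> t \<Longrightarrow> Q t < 1"
    by auto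
  define k where "k = Q T + T * Q' T"
  have "k > 0"
    using dilation_pos \<open>T > 0\<close> unfolding k_def by blast
  have dilation_ge: "k \<le> Q t + t * Q' t" if "T \<le> t" for t
    unfolding k_def
  proof (rule DERIV_nonneg_imp_nondecreasing[OF that])
    fix s assume "T \<le> s" "s \<le> t"
    then have "0 < Q s" "Q s < 1" "0 < s"
      using ground_state_pos[OF gs] Q_lt_1 \<open>T > 0\<close> by auto
    then have "Q s * (Q s)\<^sup>2 \<le> Q s"
      by (intro mult_left_le power_le_one) auto
    then have "0 \<le> s * (Q s - Q s ^ 3)"
      using \<open>0 < s\<close> by (simp add: power3_eq_cube power2_eq_square)
    with ground_state_derivs(2)[OF gs \<open>0 < s\<close>]
    show "\<exists>y. ((\<lambda>s. Q s + s * Q' s) has_real_derivative y) (at s) \<and> 0 \<le> y"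
      by blast
  qed
  have linear_growth: "T * Q T - k * T \<le> t * Q t - k * t" if "T \<le> t" for t
  proof (rule DERIV_nonneg_imp_nondecreasing[OF that])
    fix s assume "T \<le> s" "s \<le> t"
    then show "\<exists>y. ((\<lambda>s. s * Q s - k * s) has_real_derivative y) (at s) \<and> 0 \<le> y"
      using ground_state_deriv[OF gs] dilation_ge \<open>T > 0\<close>
      by (intro exI[of _ "Q s + s * Q' s - k"]) (auto intro!: derivative_eq_intros)
  qed
  have Q_ge: "Q t \<ge> k / 2" if "2 * T \<le> t" for t
  proof -
    have "k * (t / 2) \<le> k * (t - T)"
      using \<open>k > 0\<close> that by simp
    also have "\<dots> \<le> t * Q t"
      using linear_growth[of t] that \<open>T > 0\<close> ground_state_pos[OF gs, of T] mult_pos_pos[of T "Q T"]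
      unfolding right_diff_distrib by linarith
    finally show ?thesis
      using that \<open>T > 0\<close> by (simp add: field_simps)
  qed
  have "\<forall>\<^sub>F t in at_top. Q t < k / 2"
    using ground_state_tendsto_at_top[OF gs] by (rule order_tendstoD(2)) (use \<open>k > 0\<close> in simp)
  then obtain N where "\<And>t. N \<le> t \<Longrightarrow> Q t < k / 2"
    unfolding eventually_at_top_linorder by blast
  then show False
    using Q_ge[of "max N (2 * T)"] by (metis max.cobounded1 max.cobounded2 not_le)
qed

lemma ground_state_dilation_first_zero:
  assumes gs: "ground_state_profile Q Q'"
  obtains t1 where "0 < t1" "Q t1 + t1 * Q' t1 = 0"
    and "\<And>s. 0 < s \<Longrightarrow> s < t1 \<Longrightarrow> Q s + s * Q' s > 0"
proof -
  obtain t where "0 < t" "Q t + t * Q' t \<le> 0"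
    using ground_state_dilation_nonpos[OF gs] by blast
  moreover have "\<forall>\<^sub>F s in at_right 0. Q s + s * Q' s > 0"
    using ground_state_dilation_tendsto_at_right_0[OF gs]
    by (rule order_tendstoD(1)) (use ground_state_pos[OF gs, of 0] in simp)
  ultimately show thesis
    using DERIV_isCont[OF ground_state_derivs(2)[OF gs]]
    by (elim exists_first_zero[of "\<lambda>s. Q s + s * Q' s" t]) (auto intro: that)
qed

lemma solves_FD:
  assumes "solves_F Q eps F F'"
  shows solves_F_0: "F 0 = 0"
    and solves_F_deriv_0: "(F has_real_derivative -1) (at 0 within {0..})"
    and solves_F_deriv: "\<And>t. 0 < t \<Longrightarrow> (F has_real_derivative F' t) (at t)"
    and solves_F_deriv2: "\<And>t. 0 < t \<Longrightarrow> (F' has_real_derivative (eps - 3 * Q t ^ 2) * F t) (at t)"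
  using assms by (auto simp: solves_F_def)

lemma solves_F_tendsto_at_right_0:
  assumes "solves_F Q eps F F'"
  shows "(F \<longlongrightarrow> 0) (at_right 0)"
  using tendsto_at_right_of_has_real_derivative_within[OF solves_F_deriv_0[OF assms]]
  by (simp add: solves_F_0[OF assms])

lemma solves_F_quotient_tendsto_at_right_0:
  assumes "solves_F Q eps F F'"
  shows "((\<lambda>t. F t / t) \<longlongrightarrow> -1) (at_right 0)"
  using solves_F_deriv_0[OF assms]
  by (simp add: has_field_derivative_iff at_within_Ici_at_right solves_F_0[OF assms])

lemma solves_F_neg_at_right_0:
  assumes "solves_F Q eps F F'"
  shows "\<forall>\<^sub>F t in at_right 0. F t < 0"
proof -
  have "\<forall>\<^sub>F t in at_right 0. F t / t < 0"
    using solves_F_quotient_tendsto_at_right_0[OF assms] by (rule order_tendstoD(2)) simp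
  then show ?thesis
    using eventually_at_right_less[of "0::real"] by eventually_elim (simp add: divide_less_0_iff)
qed

lemma solves_F_deriv_tendsto_at_right_0:
  assumes gs: "ground_state_profile Q Q'" and sf: "solves_F Q eps F F'"
  shows "(F' \<longlongrightarrow> -1) (at_right 0)"
proof -
  have "((\<lambda>t. (eps - 3 * Q t ^ 2) * F t) \<longlongrightarrow> (eps - 3 * Q 0 ^ 2) * 0) (at_right 0)"
    by (intro tendsto_intros solves_F_tendsto_at_right_0[OF sf]
        tendsto_at_right_of_has_real_derivative_within[OF ground_state_deriv_0[OF gs]])
  then obtain L where F'_lim: "(F' \<longlongrightarrow> L) (at_right 0)"
    using convergent_at_right_of_deriv_tendsto[OF solves_F_deriv2[OF sf]] by auto
  have "((\<lambda>t. F t / t) \<longlongrightarrow> L) (at_right 0)"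
  proof (rule lhopital_right_0[OF solves_F_tendsto_at_right_0[OF sf] tendsto_ident_at])
    show "\<forall>\<^sub>F t in at_right 0. (t::real) \<noteq> 0"
      by (rule eventually_at_right_greaterI) simp
    show "\<forall>\<^sub>F t in at_right 0. (1::real) \<noteq> 0"
      by simp
    show "\<forall>\<^sub>F t in at_right 0. (F has_real_derivative F' t) (at t)"
      by (rule eventually_at_right_greaterI) (rule solves_F_deriv[OF sf])
    show "\<forall>\<^sub>F t in at_right 0. ((\<lambda>t. t) has_real_derivative 1) (at t)"
      by (auto intro!: eventually_at_right_greaterI derivative_eq_intros)
    show "((\<lambda>t. F' t / 1) \<longlongrightarrow> L) (at_right 0)"
      using F'_lim by simp
  qed
  with solves_F_quotient_tendsto_at_right_0[OF sf] have "L = -1"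
    using tendsto_unique[of "at_right (0::real)"] by fastforce
  with F'_lim show ?thesis
    by simp
qed

lemma solves_F_first_zero:
  assumes "solves_F Q eps F F'" "0 < t" "F t \<ge> 0"
  obtains z where "0 < z" "F z = 0" "\<And>s. 0 < s \<Longrightarrow> s < z \<Longrightarrow> F s < 0"
proof -
  have "\<forall>\<^sub>F s in at_right 0. - F s > 0"
    using solves_F_neg_at_right_0[OF assms(1)] by simp
  moreover have "isCont (\<lambda>s. - F s) s" if "0 < s" for s
    using DERIV_isCont[OF solves_F_deriv[OF assms(1) that]] by (rule isCont_minus)
  ultimately show thesis
    using assms(2,3) by (elim exists_first_zero[of "\<lambda>s. - F s" t]) (auto intro: that)
qed

lemma solves_F_radial_dilation_wronskian:
  assumes gs: "ground_state_profile Q Q'" and sf: "solves_F Q eps F F'"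
  defines "W \<equiv> \<lambda>s. F' s * radial_dilation Q Q' s - F s * radial_dilation_deriv Q Q' s"
  shows "\<And>t. 0 < t \<Longrightarrow> (W has_real_derivative
            (eps - 1) * F t * radial_dilation Q Q' t - F t * (2 * t * Q t)) (at t)"
    and "(W \<longlongrightarrow> 0) (at_right 0)"
proof -
  show "(W has_real_derivative
          (eps - 1) * F t * radial_dilation Q Q' t - F t * (2 * t * Q t)) (at t)" if "0 < t" for t
  proof -
    have "(W has_real_derivative
            ((eps - 3 * Q t ^ 2) - (1 - 3 * Q t ^ 2)) * F t * radial_dilation Q Q' t
              - F t * (2 * t * Q t)) (at t)"
      unfolding W_def using solves_F_deriv[OF sf that] solves_F_deriv2[OF sf that]
        radial_dilation_derivs[OF gs that]
      by (rule wronskian_has_real_derivative)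
    then show ?thesis
      by simp
  qed
  have "(W \<longlongrightarrow> -1 * 0 - 0 * Q 0) (at_right 0)"
    unfolding W_def
    by (intro tendsto_intros solves_F_deriv_tendsto_at_right_0[OF gs sf]
        solves_F_tendsto_at_right_0[OF sf] radial_dilation_tendsto_at_right_0[OF gs])
  then show "(W \<longlongrightarrow> 0) (at_right 0)"
    by simp
qed

lemma solves_F_changes_sign:
  assumes gs: "ground_state_profile Q Q'" and "eps \<le> 1" and sf: "solves_F Q eps F F'"
  shows "\<exists>t>0. F t > 0"
proof (rule ccontr)
  assume "\<not> ?thesis"
  then have F_nonpos: "\<And>t. 0 < t \<Longrightarrow> F t \<le> 0"
    by (meson not_le)
  obtain t1 where "0 < t1" and "Q t1 + t1 * Q' t1 = 0"
    and dilation_pos: "\<And>s. 0 < s \<Longrightarrow> s < t1 \<Longrightarrow> Q s + s * Q' s > 0"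
    using ground_state_dilation_first_zero[OF gs] by blast
  then have G_t1: "radial_dilation Q Q' t1 = 0"
    and G_pos: "\<And>s. 0 < s \<Longrightarrow> s < t1 \<Longrightarrow> radial_dilation Q Q' s > 0"
    by (simp_all add: radial_dilation_def)
  define W where "W = (\<lambda>s. F' s * radial_dilation Q Q' s - F s * radial_dilation_deriv Q Q' s)"
  define W' where "W' s = (eps - 1) * F s * radial_dilation Q Q' s - F s * (2 * s * Q s)" for s
  have W_deriv: "(W has_real_derivative W' s) (at s)" if "0 < s" for s
    using solves_F_radial_dilation_wronskian(1)[OF gs sf that] by (simp add: W_def W'_def)
  have first_nonneg: "0 \<le> (eps - 1) * F s * radial_dilation Q Q' s" if "0 < s" "s < t1" for s
    using \<open>eps \<le> 1\<close> F_nonpos[OF that(1)] G_pos[OF that]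
    by (intro mult_nonneg_nonneg mult_nonpos_nonpos) auto
  have second_neg: "F s * (2 * s * Q s) < 0" if "0 < s" "F s < 0" for s
    using ground_state_pos[OF gs, of s] that by (intro mult_neg_pos) auto
  have second_nonpos: "F s * (2 * s * Q s) \<le> 0" if "0 < s" for s
    using ground_state_pos[OF gs, of s] F_nonpos[OF that] that by (intro mult_nonpos_nonneg) auto
  have "W t1 > 0"
  proof (rule pos_of_deriv_nonneg_at_right_0[OF _ W_deriv])
    show "(W \<longlongrightarrow> 0) (at_right 0)"
      using solves_F_radial_dilation_wronskian(2)[OF gs sf] by (simp add: W_def)
    show "0 \<le> W' s" if "0 < s" "s < t1" for s
      using first_nonneg[OF that] second_nonpos[OF that(1)] unfolding W'_def by linarith
    show "\<forall>\<^sub>F s in at_right 0. 0 < W' s"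
      using solves_F_neg_at_right_0[OF sf] eventually_at_right_less[of "0::real"]
        order_tendstoD(2)[OF tendsto_ident_at \<open>0 < t1\<close>, of "{0<..}"]
    proof eventually_elim
      case (elim s)
      with first_nonneg[of s] second_neg[of s] show ?case
        unfolding W'_def by linarith
    qed
  qed (use \<open>0 < t1\<close> in auto)
  moreover have "radial_dilation_deriv Q Q' t1 \<le> 0"
    using radial_dilation_derivs(1)[OF gs \<open>0 < t1\<close>] G_t1 \<open>0 < t1\<close> G_pos
    by (rule has_real_derivative_nonpos_at_first_zero)
  then have "W t1 \<le> 0"
    using G_t1 mult_nonpos_nonpos[OF F_nonpos[OF \<open>0 < t1\<close>]] by (simp add: W_def)
  ultimately show False
    by simp
qed

lemma solves_F_wronskian:
  assumes gs: "ground_state_profile Q Q'"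
    and sf: "solves_F Q eps F F'" and sf0: "solves_F Q eps0 F0 F0'"
  defines "W \<equiv> \<lambda>s. F' s * F0 s - F s * F0' s"
  shows "\<And>t. 0 < t \<Longrightarrow> (W has_real_derivative (eps - eps0) * F t * F0 t) (at t)"
    and "(W \<longlongrightarrow> 0) (at_right 0)"
proof -
  show "(W has_real_derivative (eps - eps0) * F t * F0 t) (at t)" if "0 < t" for t
  proof -
    have "(W has_real_derivative
            ((eps - 3 * Q t ^ 2) - (eps0 - 3 * Q t ^ 2)) * F t * F0 t - F t * 0) (at t)"
      unfolding W_def using solves_F_deriv[OF sf that] solves_F_deriv2[OF sf that]
        solves_F_deriv[OF sf0 that] solves_F_deriv2[OF sf0 that]
      by (intro wronskian_has_real_derivative) simp_all
    then show ?thesis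
      by simp
  qed
  have "(W \<longlongrightarrow> -1 * 0 - 0 * -1) (at_right 0)"
    unfolding W_def
    by (intro tendsto_intros solves_F_deriv_tendsto_at_right_0[OF gs sf]
        solves_F_deriv_tendsto_at_right_0[OF gs sf0]
        solves_F_tendsto_at_right_0[OF sf] solves_F_tendsto_at_right_0[OF sf0])
  then show "(W \<longlongrightarrow> 0) (at_right 0)"
    by simp
qed

lemma solves_F_first_zero_mono:
  assumes gs: "ground_state_profile Q Q'" and "eps0 \<le> eps"
    and sf: "solves_F Q eps F F'" and sf0: "solves_F Q eps0 F0 F0'"
    and "0 < t" "F t = 0" and F_neg: "\<And>s. 0 < s \<Longrightarrow> s < t \<Longrightarrow> F s < 0"
    and F0_neg: "\<And>s. 0 < s \<Longrightarrow> s < t0 \<Longrightarrow> F0 s < 0"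
  shows "t0 \<le> t"
proof (rule ccontr)
  assume "\<not> t0 \<le> t"
  then have F0_neg': "F0 s < 0" if "0 < s" "s \<le> t" for s
    using F0_neg that by simp
  have wronskian_nonneg: "0 \<le> F' s * F0 s - F s * F0' s" if "0 < s" "s \<le> t" for s
  proof (rule nonneg_of_deriv_nonneg_at_right_0[OF solves_F_wronskian(2)[OF gs sf sf0] _ _ \<open>0 < s\<close>])
    show "((\<lambda>s. F' s * F0 s - F s * F0' s) has_real_derivative (eps - eps0) * F r * F0 r) (at r)"
      if "0 < r" for r
      by (rule solves_F_wronskian(1)[OF gs sf sf0 that])
    show "0 \<le> (eps - eps0) * F r * F0 r" if "0 < r" "r < s" for r
      using \<open>eps0 \<le> eps\<close> F_neg[of r] F0_neg'[of r] that \<open>s \<le> t\<close>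
      by (simp add: mult.assoc mult_nonneg_nonneg mult_neg_neg less_imp_le)
  qed
  have "F (t/2) / F0 (t/2) \<le> F t / F0 t"
  proof (rule divide_le_divide_of_wronskian_nonneg)
    show "(F has_real_derivative F' s) (at s)" "(F0 has_real_derivative F0' s) (at s)"
      if "t/2 \<le> s" for s
      using solves_F_deriv[OF sf] solves_F_deriv[OF sf0] that \<open>0 < t\<close> by auto
    show "F0 s \<noteq> 0" if "t/2 \<le> s" "s \<le> t" for s
      using F0_neg'[of s] that \<open>0 < t\<close> by simp
    show "0 \<le> F' s * F0 s - F s * F0' s" if "t/2 < s" "s < t" for s
      using wronskian_nonneg[of s] that \<open>0 < t\<close> by simp
  qed (use \<open>0 < t\<close> in simp)
  moreover have "F (t/2) / F0 (t/2) > 0"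
    using F_neg[of "t/2"] F0_neg'[of "t/2"] \<open>0 < t\<close> by (simp add: divide_neg_neg)
  ultimately show False
    using \<open>F t = 0\<close> by simp
qed

theorem lemma6p1:
  fixes Q Q' F F' F0 F0' :: "real \<Rightarrow> real" and eps :: real
  assumes "ground_state_profile Q Q'"
    and "0 \<le> eps" and "eps \<le> 1"
    and "solves_F Q eps F F'"
    and "solves_F Q 0 F0 F0'"
  shows "(\<exists>s>0. \<exists>t>0. F s < 0 \<and> F t > 0) \<and>
         (\<exists>t_eps t0. t_eps > 0 \<and> F t_eps = 0 \<and> (\<forall>s. 0 < s \<and> s < t_eps \<longrightarrow> F s \<noteq> 0) \<and>
                    t0 > 0 \<and> F0 t0 = 0 \<and> (\<forall>s. 0 < s \<and> s < t0 \<longrightarrow> F0 s \<noteq> 0) \<and>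
                    t0 \<le> t_eps)"
proof -
  note gs = assms(1) and sf = assms(4) and sf0 = assms(5)
  have "\<forall>\<^sub>F s in at_right 0. 0 < s \<and> F s < 0"
    using eventually_at_right_less solves_F_neg_at_right_0[OF sf] by eventually_elim simp
  then obtain s where s: "0 < s" "F s < 0"
    using eventually_happens'[OF trivial_limit_at_right_real] by blast
  obtain t where t: "0 < t" "F t > 0"
    using solves_F_changes_sign[OF gs \<open>eps \<le> 1\<close> sf] by blast
  then obtain t_eps where t_eps: "0 < t_eps" "F t_eps = 0"
    and F_neg: "\<And>s. 0 < s \<Longrightarrow> s < t_eps \<Longrightarrow> F s < 0"
    using solves_F_first_zero[OF sf, of t] by auto
  obtain t0' where "0 < t0'" "F0 t0' > 0"
    using solves_F_changes_sign[OF gs _ sf0] by auto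
  then obtain t0 where t0: "0 < t0" "F0 t0 = 0"
    and F0_neg: "\<And>s. 0 < s \<Longrightarrow> s < t0 \<Longrightarrow> F0 s < 0"
    using solves_F_first_zero[OF sf0, of t0'] by auto
  have "t0 \<le> t_eps"
    using gs \<open>0 \<le> eps\<close> sf sf0 t_eps F_neg F0_neg by (rule solves_F_first_zero_mono)
  with s t t_eps t0 F_neg F0_neg show ?thesis
    by (metis less_irrefl)
qed

end
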